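(* There is an absolute constant $C$ such that for every $n\geq 1$ and every $w\in\{0,1\}^n$, there is a first-order sentence over $\tau_{\mathsf{string}}$ with at most $3\log_3(n)+C$ quantifiers that is true in $\mathbf{B}_w$ and false in $\mathbf{B}_{w'}$ for every binary string $w'\neq w$ of any length $\geq 1$.
   Context: Vocabulary $\tau_{\mathsf{string}}=\langle <, S;\ \mathsf{min},\mathsf{max}\rangle$ with $<$ binary, $S$ unary, $\mathsf{min},\mathsf{max}$ constants. A string $w=w_1\cdots w_n\in\{0,1\}^n$ ($n\geq 1$) is encoded by the structure $\mathbf{B}_w$ with universe $\{1,\dots,n\}$, $<$ the usual order, $S=\{i: w_i=1\}$, $\mathsf{min}=1$, $\mathsf{max}=n$. The number of quantifiers is the number of quantifier occurrences. *)

theory Defs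
  imports Complex_Main
begin

text \<open>First-order logic over the string vocabulary (<, S; min, max).
  Variables are natural numbers. A binary string is a nonempty bool list;
  position i (1-based) carries letter 1 iff w ! (i - 1).\<close>

datatype fterm = V nat | MinC | MaxC

datatype fo =
    Eq fterm fterm
  | Less fterm fterm
  | S fterm
  | Neg fo
  | Conj fo fo
  | Disj fo fo
  | Ex nat fo
  | All nat fo

fun tvars :: "fterm \<Rightarrow> nat set" where
  "tvars (V x) = {x}"
| "tvars MinC = {}"
| "tvars MaxC = {}"

fun free_vars :: "fo \<Rightarrow> nat set" where
  "free_vars (Eq s t) = tvars s \<union> tvars t"
| "free_vars (Less s t) = tvars s \<union> tvars t"
| "free_vars (S t) = tvars t"
| "free_vars (Neg \<phi>) = free_vars \<phi>"
| "free_vars (Conj \<phi> \<psi>) = free_vars \<phi> \<union> free_vars \<psi>"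
| "free_vars (Disj \<phi> \<psi>) = free_vars \<phi> \<union> free_vars \<psi>"
| "free_vars (Ex x \<phi>) = free_vars \<phi> - {x}"
| "free_vars (All x \<phi>) = free_vars \<phi> - {x}"

definition sentence :: "fo \<Rightarrow> bool" where
  "sentence \<phi> \<longleftrightarrow> free_vars \<phi> = {}"

fun qcount :: "fo \<Rightarrow> nat" where
  "qcount (Eq s t) = 0"
| "qcount (Less s t) = 0"
| "qcount (S t) = 0"
| "qcount (Neg \<phi>) = qcount \<phi>"
| "qcount (Conj \<phi> \<psi>) = qcount \<phi> + qcount \<psi>"
| "qcount (Disj \<phi> \<psi>) = qcount \<phi> + qcount \<psi>"
| "qcount (Ex x \<phi>) = Suc (qcount \<phi>)"
| "qcount (All x \<phi>) = Suc (qcount \<phi>)"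

fun teval :: "bool list \<Rightarrow> (nat \<Rightarrow> nat) \<Rightarrow> fterm \<Rightarrow> nat" where
  "teval w v (V x) = v x"
| "teval w v MinC = 1"
| "teval w v MaxC = length w"

fun sat :: "bool list \<Rightarrow> (nat \<Rightarrow> nat) \<Rightarrow> fo \<Rightarrow> bool" where
  "sat w v (Eq s t) = (teval w v s = teval w v t)"
| "sat w v (Less s t) = (teval w v s < teval w v t)"
| "sat w v (S t) = (w ! (teval w v t - 1))"
| "sat w v (Neg \<phi>) = (\<not> sat w v \<phi>)"
| "sat w v (Conj \<phi> \<psi>) = (sat w v \<phi> \<and> sat w v \<psi>)"
| "sat w v (Disj \<phi> \<psi>) = (sat w v \<phi> \<or> sat w v \<psi>)"
| "sat w v (Ex x \<phi>) = (\<exists>i\<in>{1..length w}. sat w (v(x := i)) \<phi>)"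
| "sat w v (All x \<phi>) = (\<forall>i\<in>{1..length w}. sat w (v(x := i)) \<phi>)"

text \<open>Truth of a sentence in B_w (the valuation is irrelevant for sentences;
  we use the constant valuation 1, which lies in the universe).\<close>
definition models :: "bool list \<Rightarrow> fo \<Rightarrow> bool" where
  "models w \<phi> \<longleftrightarrow> sat w (\<lambda>_. 1) \<phi>"

end

theory Submission
  imports Defs
begin

text \<open>A word t of length at most 3^(r+1) + 1 is cut into three pieces of length at most 3^r + 1 that
  overlap in one letter each. That positions A..B spell t is expressed by \<open>\<exists>I \<exists>J \<forall>L\<close> over a matrix
  saying that A \<le> I \<le> J are placed at the right distances and that, if L is J, I or A, the piece
  starting at L is spelled up to B, J or I respectively. The three recursive assertions all start at
  the same variable L, so they can share one quantifier prefix for the level below: each level adds only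
  three quantifiers while the length of the words triples, and a word of length n is defined by a
  sentence with 3 \<lceil>log_3 n\<rceil> + 1 quantifiers.\<close>

lemma teval_cong: "\<forall>x\<in>tvars s. v x = v' x \<Longrightarrow> teval w v s = teval w v' s"
  by (cases s) auto

lemma sat_cong: "\<forall>x\<in>free_vars \<phi>. v x = v' x \<Longrightarrow> sat w v \<phi> = sat w v' \<phi>"
proof (induction \<phi> arbitrary: v v')
  case (Eq s t)
  then show ?case by (simp add: teval_cong[of s v v'] teval_cong[of t v v'])
next
  case (Less s t)
  then show ?case by (simp add: teval_cong[of s v v'] teval_cong[of t v v'])
next
  case (S t)
  then show ?case by (simp add: teval_cong[of t v v'])
next
  case (Ex x \<phi>)
  have "\<And>i. sat w (v(x := i)) \<phi> = sat w (v'(x := i)) \<phi>" using Ex by (intro Ex.IH) auto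
  then show ?case by simp
next
  case (All x \<phi>)
  have "\<And>i. sat w (v(x := i)) \<phi> = sat w (v'(x := i)) \<phi>" using All by (intro All.IH) auto
  then show ?case by simp
next
  case (Conj \<phi> \<psi>)
  have "sat w v \<phi> = sat w v' \<phi>" "sat w v \<psi> = sat w v' \<psi>"
    using Conj.prems by (auto intro!: Conj.IH)
  then show ?case by simp
next
  case (Disj \<phi> \<psi>)
  have "sat w v \<phi> = sat w v' \<phi>" "sat w v \<psi> = sat w v' \<psi>"
    using Disj.prems by (auto intro!: Disj.IH)
  then show ?case by simp
qed simp

lemma sat_fun_upd_fresh: "x \<notin> free_vars \<phi> \<Longrightarrow> sat w (v(x := i)) \<phi> = sat w v \<phi>"
  by (rule sat_cong) simp

fun prenex :: "(bool \<times> nat) list \<Rightarrow> fo \<Rightarrow> fo" where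
  "prenex [] \<phi> = \<phi>"
| "prenex ((True, x) # qs) \<phi> = Ex x (prenex qs \<phi>)"
| "prenex ((False, x) # qs) \<phi> = All x (prenex qs \<phi>)"

fun sat_prefix :: "bool list \<Rightarrow> (bool \<times> nat) list \<Rightarrow> ((nat \<Rightarrow> nat) \<Rightarrow> bool) \<Rightarrow> (nat \<Rightarrow> nat) \<Rightarrow> bool"
  where
  "sat_prefix w [] P v = P v"
| "sat_prefix w ((True, x) # qs) P v = (\<exists>i\<in>{1..length w}. sat_prefix w qs P (v(x := i)))"
| "sat_prefix w ((False, x) # qs) P v = (\<forall>i\<in>{1..length w}. sat_prefix w qs P (v(x := i)))"

lemma sat_prenex: "sat w v (prenex qs \<phi>) = sat_prefix w qs (\<lambda>v. sat w v \<phi>) v"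
  by (induction qs \<phi> arbitrary: v rule: prenex.induct) auto

lemma qcount_prenex: "qcount (prenex qs \<phi>) = length qs + qcount \<phi>"
  by (induction qs \<phi> rule: prenex.induct) auto

lemma free_vars_prenex: "free_vars (prenex qs \<phi>) = free_vars \<phi> - snd ` set qs"
  by (induction qs \<phi> rule: prenex.induct) auto

lemma sat_prefix_const: "length w \<ge> 1 \<Longrightarrow> sat_prefix w qs (\<lambda>_. c) v = c"
  by (induction w qs "\<lambda>_::nat \<Rightarrow> nat. c" v rule: sat_prefix.induct) force+

lemma sat_prefix_if:
  assumes "\<And>v x i. x \<in> snd ` set qs \<Longrightarrow> c (v(x := i)) = c v"
  shows "sat_prefix w qs (\<lambda>v. if c v then P v else Q v) v =
    (if c v then sat_prefix w qs P v else sat_prefix w qs Q v)"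
  using assms by (induction w qs "\<lambda>v. if c v then P v else Q v" v rule: sat_prefix.induct) auto

definition fo_ite :: "fo \<Rightarrow> fo \<Rightarrow> fo \<Rightarrow> fo" where
  "fo_ite \<phi> \<psi> \<chi> = Disj (Conj \<phi> \<psi>) (Conj (Neg \<phi>) \<chi>)"

definition fo_true :: fo where
  "fo_true = Eq MinC MinC"

lemma sat_prefix_fo_ite:
  assumes "free_vars \<phi> \<inter> snd ` set qs = {}"
  shows "sat_prefix w qs (\<lambda>v. sat w v (fo_ite \<phi> \<psi> \<chi>)) v =
    (if sat w v \<phi> then sat_prefix w qs (\<lambda>v. sat w v \<psi>) v else sat_prefix w qs (\<lambda>v. sat w v \<chi>) v)"
proof -
  have "(\<lambda>v. sat w v (fo_ite \<phi> \<psi> \<chi>)) = (\<lambda>v. if sat w v \<phi> then sat w v \<psi> else sat w v \<chi>)"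
    by (auto simp: fo_ite_def)
  moreover have "sat w (v(x := i)) \<phi> = sat w v \<phi>" if "x \<in> snd ` set qs" for v x i
    using assms that by (intro sat_fun_upd_fresh) auto
  ultimately show ?thesis
    by (simp only: sat_prefix_if)
qed

lemma sat_prefix_Conj:
  assumes "length w \<ge> 1" "free_vars \<phi> \<inter> snd ` set qs = {}"
  shows "sat_prefix w qs (\<lambda>v. sat w v (Conj \<phi> \<psi>)) v = (sat w v \<phi> \<and> sat_prefix w qs (\<lambda>v. sat w v \<psi>) v)"
proof -
  have "(\<lambda>v. sat w v (Conj \<phi> \<psi>)) = (\<lambda>v. if sat w v \<phi> then sat w v \<psi> else False)"
    by auto
  moreover have "sat w (v(x := i)) \<phi> = sat w v \<phi>" if "x \<in> snd ` set qs" for v x i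
    using assms that by (intro sat_fun_upd_fresh) auto
  ultimately show ?thesis
    using sat_prefix_const[OF assms(1)] by (simp only: sat_prefix_if) simp
qed

lemma sat_prefix_fo_true: "length w \<ge> 1 \<Longrightarrow> sat_prefix w qs (\<lambda>v. sat w v fo_true) v"
  using sat_prefix_const[of w qs True] by (simp add: fo_true_def)

definition spells :: "bool list \<Rightarrow> nat \<Rightarrow> nat \<Rightarrow> bool list \<Rightarrow> bool" where
  "spells w a b t \<longleftrightarrow>
     1 \<le> a \<and> b \<le> length w \<and> b + 1 = a + length t \<and> (\<forall>m<length t. w ! (a - 1 + m) = t ! m)"

lemma spells_overlap:
  assumes k: "k < length t"
  shows "spells w a b t \<longleftrightarrow> spells w a (a + k) (take (k + 1) t) \<and> spells w (a + k) b (drop k t)"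
    (is "?t \<longleftrightarrow> ?t1 \<and> ?t2")
proof
  assume ?t
  then have a: "1 \<le> a" and b: "b \<le> length w" "b + 1 = a + length t"
    and letters: "\<And>m. m < length t \<Longrightarrow> w ! (a - 1 + m) = t ! m"
    by (auto simp: spells_def)
  have ?t1 unfolding spells_def using a b k letters by auto
  moreover have "w ! (a + k - 1 + m) = drop k t ! m" if "m < length (drop k t)" for m
    using letters[of "k + m"] that a k by (simp add: add.commute add.left_commute)
  then have ?t2 unfolding spells_def using a b k by auto
  ultimately show "?t1 \<and> ?t2" ..
next
  assume "?t1 \<and> ?t2"
  then have a: "1 \<le> a" and b: "b \<le> length w" "b + 1 = a + length t"
    and letters1: "\<And>m. m \<le> k \<Longrightarrow> w ! (a - 1 + m) = t ! m"
    and letters2: "\<And>m. m < length t - k \<Longrightarrow> w ! (a + k - 1 + m) = t ! (k + m)"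
    using k by (auto simp: spells_def)
  have "w ! (a - 1 + m) = t ! m" if "m < length t" for m
  proof (cases "m \<le> k")
    case True
    then show ?thesis by (rule letters1)
  next
    case False
    then show ?thesis using letters2[of "m - k"] that a by simp
  qed
  with a b show ?t by (simp add: spells_def)
qed

lemma spells_length: "spells w a b t \<Longrightarrow> b + 1 = a + length t"
  by (simp add: spells_def)

lemma spells_take1:
  assumes "spells w a b t" "t \<noteq> []"
  shows "spells w a a (take 1 t)"
proof -
  have "0 < length t" using assms(2) by simp
  then have "spells w a (a + 0) (take (0 + 1) t)" using spells_overlap assms(1) by blast
  then show ?thesis by simp
qed

lemma spells_whole: "spells w' 1 (length w') w \<longleftrightarrow> w' = w"
proof
  assume "spells w' 1 (length w') w"
  then show "w' = w"
    by (simp add: spells_def list_eq_iff_nth_eq)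
qed (simp add: spells_def)

lemma spells_length1:
  "length t = 1 \<Longrightarrow> spells w a b t \<longleftrightarrow> 1 \<le> a \<and> b = a \<and> a \<le> length w \<and> w ! (a - 1) = t ! 0"
  by (simp add: spells_def) linarith

lemma spells_length2:
  "length t = 2 \<Longrightarrow> spells w a b t \<longleftrightarrow>
     1 \<le> a \<and> b = a + 1 \<and> b \<le> length w \<and> w ! (a - 1) = t ! 0 \<and> w ! (b - 1) = t ! 1"
  by (cases a) (auto simp: spells_def numeral_2_eq_2 All_less_Suc)

lemma spells_overlap3:
  assumes "k1 + k2 < length t"
  shows "spells w a b t \<longleftrightarrow>
    spells w a (a + k1) (take (k1 + 1) t) \<and>
    spells w (a + k1) (a + k1 + k2) (take (k2 + 1) (drop k1 t)) \<and>
    spells w (a + k1 + k2) b (drop (k1 + k2) t)"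
proof -
  have "spells w a b t \<longleftrightarrow> spells w a (a + k1) (take (k1 + 1) t) \<and> spells w (a + k1) b (drop k1 t)"
    by (rule spells_overlap) (use assms in simp)
  also have "spells w (a + k1) b (drop k1 t) \<longleftrightarrow>
      spells w (a + k1) (a + k1 + k2) (take (k2 + 1) (drop k1 t)) \<and>
      spells w (a + k1 + k2) b (drop k2 (drop k1 t))"
    by (rule spells_overlap) (use assms in simp)
  finally show ?thesis by (simp add: add.commute)
qed

definition advances :: "nat \<Rightarrow> nat \<Rightarrow> nat \<Rightarrow> bool" where
  "advances k x y \<longleftrightarrow> (if k = 0 then x = y else x < y)"

text \<open>Only the first guard that holds is checked, so when L coincides with several of A, I, J a piece is
  skipped; \<open>advances\<close> permits a coincidence only when the skipped piece is a single letter that the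
  checked piece starts with.\<close>

lemma spells_iff_guarded:
  assumes k: "k1 + k2 < length t" and a: "a \<in> {1..length w}"
  shows "spells w a b t \<longleftrightarrow>
    (\<exists>i\<in>{1..length w}. \<exists>j\<in>{1..length w}. \<forall>l\<in>{1..length w}.
       advances k1 a i \<and> advances k2 i j \<and>
       (if l = j then spells w l b (drop (k1 + k2) t)
        else if l = i then spells w l j (take (k2 + 1) (drop k1 t))
        else if l = a then spells w l i (take (k1 + 1) t) else True))"
    (is "_ \<longleftrightarrow> (\<exists>i\<in>?R. \<exists>j\<in>?R. \<forall>l\<in>?R. ?guarded i j l)")
proof
  assume "spells w a b t"
  then have s1: "spells w a (a + k1) (take (k1 + 1) t)"
    and s2: "spells w (a + k1) (a + k1 + k2) (take (k2 + 1) (drop k1 t))"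
    and s3: "spells w (a + k1 + k2) b (drop (k1 + k2) t)"
    using spells_overlap3[OF k] by blast+
  have "a + k1 + k2 \<le> b" "b \<le> length w"
    using spells_length[OF s3] k s3 by (auto simp: spells_def)
  then have "a + k1 \<in> ?R" "a + k1 + k2 \<in> ?R" using a by auto
  moreover have "?guarded (a + k1) (a + k1 + k2) l" for l
    using s1 s2 s3 by (auto simp: advances_def)
  ultimately show "\<exists>i\<in>?R. \<exists>j\<in>?R. \<forall>l\<in>?R. ?guarded i j l" by blast
next
  assume "\<exists>i\<in>?R. \<exists>j\<in>?R. \<forall>l\<in>?R. ?guarded i j l"
  then obtain i j where ij: "i \<in> ?R" "j \<in> ?R" and guarded: "\<And>l. l \<in> ?R \<Longrightarrow> ?guarded i j l"
    by blast
  have adv: "advances k1 a i" "advances k2 i j" using guarded[OF a] by auto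
  have s3: "spells w j b (drop (k1 + k2) t)" using guarded[OF ij(2)] by simp
  have s2: "spells w i j (take (k2 + 1) (drop k1 t))"
  proof (cases "i = j")
    case True
    then have "k2 = 0" using adv(2) by (auto simp: advances_def split: if_splits)
    then show ?thesis using spells_take1[OF s3] k True by simp
  next
    case False
    then show ?thesis using guarded[OF ij(1)] by simp
  qed
  have s1: "spells w a i (take (k1 + 1) t)"
  proof (cases "a = i")
    case True
    then have "k1 = 0" using adv(1) by (auto simp: advances_def split: if_splits)
    then show ?thesis using spells_take1[OF s2] k True by force
  next
    case False
    then have "a < i" "i \<le> j" using adv by (auto simp: advances_def split: if_splits)
    then show ?thesis using guarded[OF a] by simp
  qed
  have "i = a + k1" "j = a + k1 + k2"
    using spells_length[OF s1] spells_length[OF s2] k by auto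
  then show "spells w a b t" using spells_overlap3[OF k] s1 s2 s3 by blast
qed

definition fo_lit :: "bool \<Rightarrow> fterm \<Rightarrow> fo" where
  "fo_lit b A = (if b then S A else Neg (S A))"

definition fo_advances :: "nat \<Rightarrow> fterm \<Rightarrow> fterm \<Rightarrow> fo" where
  "fo_advances k A B = (if k = 0 then Eq A B else Less A B)"

lemma sat_fo_lit: "sat w v (fo_lit b A) \<longleftrightarrow> w ! (teval w v A - 1) = b"
  by (simp add: fo_lit_def)

lemma sat_fo_advances: "sat w v (fo_advances k A B) \<longleftrightarrow> advances k (teval w v A) (teval w v B)"
  by (simp add: fo_advances_def advances_def)

lemma free_vars_fo_advances: "free_vars (fo_advances k A B) = tvars A \<union> tvars B"
  by (simp add: fo_advances_def)

definition split_point :: "nat \<Rightarrow> bool list \<Rightarrow> nat" where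
  "split_point r t = min (length t - 1) (3 ^ r)"

primrec seg_prefix :: "nat \<Rightarrow> (bool \<times> nat) list" where
  "seg_prefix 0 = [(False, 0)]"
| "seg_prefix (Suc r) = [(True, 3 * Suc r), (True, 3 * Suc r + 1), (False, 3 * Suc r + 2)] @ seg_prefix r"

primrec seg :: "nat \<Rightarrow> bool list \<Rightarrow> fterm \<Rightarrow> fterm \<Rightarrow> fo" where
  "seg 0 t A B =
     (if length t \<le> 1 then Conj (Eq A B) (fo_lit (t ! 0) A)
      else Conj (Conj (Less A B) (Neg (Conj (Less A (V 0)) (Less (V 0) B))))
             (Conj (fo_lit (t ! 0) A) (fo_lit (t ! 1) B)))"
| "seg (Suc r) t A B =
     (let k1 = split_point r t; k2 = split_point r (drop k1 t);
          I = V (3 * Suc r); J = V (3 * Suc r + 1); L = V (3 * Suc r + 2)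
      in Conj (Conj (fo_advances k1 A I) (fo_advances k2 I J))
           (fo_ite (Eq L J) (seg r (drop (k1 + k2) t) L B)
             (fo_ite (Eq L I) (seg r (take (k2 + 1) (drop k1 t)) L J)
               (fo_ite (Eq L A) (seg r (take (k1 + 1) t) L I) fo_true))))"

lemma length_seg_prefix: "length (seg_prefix r) = 3 * r + 1"
  by (induction r) auto

lemma bound_vars_seg_prefix: "x \<in> snd ` set (seg_prefix r) \<Longrightarrow> x < 3 * r + 3"
  by (induction r) force+

lemma qcount_seg: "qcount (seg r t A B) = 0"
  by (induction r arbitrary: t A B) (auto simp: Let_def fo_lit_def fo_advances_def fo_ite_def fo_true_def)

lemma free_vars_seg: "free_vars (seg r t A B) \<subseteq> tvars A \<union> tvars B \<union> snd ` set (seg_prefix r)"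
proof (induction r arbitrary: t A B)
  case 0
  then show ?case by (auto simp: fo_lit_def)
next
  case (Suc r)
  then show ?case
    by (auto simp: Let_def free_vars_fo_advances fo_ite_def fo_true_def dest!: Suc.IH[THEN subsetD])
qed

lemma teval_fun_upd_fresh: "x \<notin> tvars A \<Longrightarrow> teval w (v(x := i)) A = teval w v A"
  by (cases A) auto

lemma sat_prefix_seg_0:
  assumes w: "length w \<ge> 1" and t: "t \<noteq> []" "length t \<le> 2"
    and fresh: "0 \<notin> tvars A" "0 \<notin> tvars B"
    and range: "teval w v A \<in> {1..length w}" "teval w v B \<in> {1..length w}"
  shows "sat_prefix w (seg_prefix 0) (\<lambda>v. sat w v (seg 0 t A B)) v \<longleftrightarrow>
    spells w (teval w v A) (teval w v B) t"
proof -
  define a b where "a = teval w v A" and "b = teval w v B"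
  have "0 < length t" using t(1) by simp
  then consider "length t = 1" | "length t = 2" using t(2) by linarith
  then show ?thesis
  proof cases
    case 1
    then show ?thesis using w range
      by (auto simp: spells_length1 sat_fo_lit teval_fun_upd_fresh fresh)
  next
    case 2
    have "(\<forall>i\<in>{1..length w}. \<not> (a < i \<and> i < b)) \<longleftrightarrow> b = a + 1" if "a < b"
      using that range unfolding a_def b_def by force
    then show ?thesis using 2 w range
      by (auto simp: spells_length2 sat_fo_lit teval_fun_upd_fresh fresh a_def b_def)
  qed
qed

lemma length_seg_pieces:
  assumes "t \<noteq> []" "length t \<le> 3 ^ Suc r + 1"
  defines "k1 \<equiv> split_point r t" and "k2 \<equiv> split_point r (drop (split_point r t) t)"
  shows "k1 + k2 < length t" "length (take (k1 + 1) t) \<le> 3 ^ r + 1"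
    "length (take (k2 + 1) (drop k1 t)) \<le> 3 ^ r + 1" "length (drop (k1 + k2) t) \<le> 3 ^ r + 1"
  using assms by (auto simp: split_point_def min_def)

lemma sat_prefix_seg_Suc:
  fixes t :: "bool list"
  assumes w: "length w \<ge> 1" and AB: "tvars A \<union> tvars B \<subseteq> {3 * r + 6..}"
  defines "k1 \<equiv> split_point r t" and "k2 \<equiv> split_point r (drop (split_point r t) t)" and "x \<equiv> 3 * Suc r"
  shows "sat_prefix w (seg_prefix r) (\<lambda>v. sat w v (seg (Suc r) t A B)) v \<longleftrightarrow>
    advances k1 (teval w v A) (v x) \<and> advances k2 (v x) (v (x + 1)) \<and>
    (if v (x + 2) = v (x + 1)
     then sat_prefix w (seg_prefix r) (\<lambda>v. sat w v (seg r (drop (k1 + k2) t) (V (x + 2)) B)) v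
     else if v (x + 2) = v x
     then sat_prefix w (seg_prefix r) (\<lambda>v. sat w v (seg r (take (k2 + 1) (drop k1 t)) (V (x + 2)) (V (x + 1)))) v
     else if v (x + 2) = teval w v A
     then sat_prefix w (seg_prefix r) (\<lambda>v. sat w v (seg r (take (k1 + 1) t) (V (x + 2)) (V x))) v
     else True)"
proof -
  have fresh: "free_vars \<phi> \<inter> snd ` set (seg_prefix r) = {}" if "free_vars \<phi> \<subseteq> {3 * r + 3..}" for \<phi>
    using that bound_vars_seg_prefix by fastforce
  have high: "free_vars (Conj (fo_advances k1 A (V x)) (fo_advances k2 (V x) (V (x + 1)))) \<subseteq> {3 * r + 3..}"
    "free_vars (Eq (V (x + 2)) (V (x + 1))) \<subseteq> {3 * r + 3..}"
    "free_vars (Eq (V (x + 2)) (V x)) \<subseteq> {3 * r + 3..}"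
    "free_vars (Eq (V (x + 2)) A) \<subseteq> {3 * r + 3..}"
    using AB by (auto simp: x_def free_vars_fo_advances)
  have k2: "split_point r (drop k1 t) = k2" by (simp add: k1_def k2_def)
  show ?thesis
    unfolding seg.simps Let_def k1_def[symmetric] k2 x_def[symmetric]
    by (simp only: sat_prefix_Conj[OF w fresh[OF high(1)]] sat_prefix_fo_ite[OF fresh[OF high(2)]]
        sat_prefix_fo_ite[OF fresh[OF high(3)]] sat_prefix_fo_ite[OF fresh[OF high(4)]]
        sat_prefix_fo_true[OF w]) (simp add: sat_fo_advances)
qed

lemma sat_prefix_seg_Suc_spells:
  fixes t :: "bool list" and r :: nat
  defines "k1 \<equiv> split_point r t" and "k2 \<equiv> split_point r (drop (split_point r t) t)" and "x \<equiv> 3 * Suc r"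
  assumes w: "length w \<ge> 1" and AB: "tvars A \<union> tvars B \<subseteq> {3 * r + 6..}"
    and t: "t \<noteq> []" "length t \<le> 3 ^ Suc r + 1"
    and range: "v x \<in> {1..length w}" "v (x + 1) \<in> {1..length w}" "v (x + 2) \<in> {1..length w}"
      "teval w v B \<in> {1..length w}"
    and IH: "\<And>t A B. t \<noteq> [] \<Longrightarrow> length t \<le> 3 ^ r + 1 \<Longrightarrow> tvars A \<union> tvars B \<subseteq> {3 * r + 3..} \<Longrightarrow>
      teval w v A \<in> {1..length w} \<Longrightarrow> teval w v B \<in> {1..length w} \<Longrightarrow>
      sat_prefix w (seg_prefix r) (\<lambda>v. sat w v (seg r t A B)) v \<longleftrightarrow> spells w (teval w v A) (teval w v B) t"
  shows "sat_prefix w (seg_prefix r) (\<lambda>v. sat w v (seg (Suc r) t A B)) v \<longleftrightarrow>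
    advances k1 (teval w v A) (v x) \<and> advances k2 (v x) (v (x + 1)) \<and>
    (if v (x + 2) = v (x + 1) then spells w (v (x + 2)) (teval w v B) (drop (k1 + k2) t)
     else if v (x + 2) = v x then spells w (v (x + 2)) (v (x + 1)) (take (k2 + 1) (drop k1 t))
     else if v (x + 2) = teval w v A then spells w (v (x + 2)) (v x) (take (k1 + 1) t)
     else True)"
proof -
  have pieces: "k1 + k2 < length t" "length (take (k1 + 1) t) \<le> 3 ^ r + 1"
    "length (take (k2 + 1) (drop k1 t)) \<le> 3 ^ r + 1" "length (drop (k1 + k2) t) \<le> 3 ^ r + 1"
    using length_seg_pieces[OF t] unfolding k1_def k2_def by auto
  have "sat_prefix w (seg_prefix r) (\<lambda>v. sat w v (seg r (drop (k1 + k2) t) (V (x + 2)) B)) v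
      \<longleftrightarrow> spells w (v (x + 2)) (teval w v B) (drop (k1 + k2) t)"
    using IH[of "drop (k1 + k2) t" "V (x + 2)" B] pieces AB range by (force simp: x_def)
  moreover have "sat_prefix w (seg_prefix r)
      (\<lambda>v. sat w v (seg r (take (k2 + 1) (drop k1 t)) (V (x + 2)) (V (x + 1)))) v
      \<longleftrightarrow> spells w (v (x + 2)) (v (x + 1)) (take (k2 + 1) (drop k1 t))"
    using IH[of "take (k2 + 1) (drop k1 t)" "V (x + 2)" "V (x + 1)"] pieces range by (auto simp: x_def)
  moreover have "sat_prefix w (seg_prefix r) (\<lambda>v. sat w v (seg r (take (k1 + 1) t) (V (x + 2)) (V x))) v
      \<longleftrightarrow> spells w (v (x + 2)) (v x) (take (k1 + 1) t)"
    using IH[of "take (k1 + 1) t" "V (x + 2)" "V x"] pieces range t(1) by (auto simp: x_def)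
  ultimately show ?thesis
    using sat_prefix_seg_Suc[OF w AB, of t v] unfolding k1_def k2_def x_def by simp
qed

lemma sat_prefix_seg:
  assumes "length w \<ge> 1"
  shows "t \<noteq> [] \<Longrightarrow> length t \<le> 3 ^ r + 1 \<Longrightarrow> tvars A \<union> tvars B \<subseteq> {3 * r + 3..} \<Longrightarrow>
    teval w v A \<in> {1..length w} \<Longrightarrow> teval w v B \<in> {1..length w} \<Longrightarrow>
    sat_prefix w (seg_prefix r) (\<lambda>v. sat w v (seg r t A B)) v \<longleftrightarrow>
    spells w (teval w v A) (teval w v B) t"
proof (induction r arbitrary: t A B v)
  case 0
  then show ?case using assms by (intro sat_prefix_seg_0) auto
next
  case (Suc r)
  let ?R = "{1..length w}"
  define k1 k2 x where "k1 = split_point r t" and "k2 = split_point r (drop k1 t)" and "x = 3 * Suc r"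
  define a b where "a = teval w v A" and "b = teval w v B"
  have AB: "tvars A \<union> tvars B \<subseteq> {3 * r + 6..}" using Suc.prems(3) by auto
  have "k1 + k2 < length t"
    using length_seg_pieces[OF Suc.prems(1,2)] by (simp add: k1_def k2_def)
  moreover have "sat_prefix w (seg_prefix r) (\<lambda>v. sat w v (seg (Suc r) t A B)) (v(x := i, x + 1 := j, x + 2 := l))
    \<longleftrightarrow> advances k1 a i \<and> advances k2 i j \<and>
      (if l = j then spells w l b (drop (k1 + k2) t)
       else if l = i then spells w l j (take (k2 + 1) (drop k1 t))
       else if l = a then spells w l i (take (k1 + 1) t) else True)"
    if "i \<in> ?R" "j \<in> ?R" "l \<in> ?R" for i j l
  proof -
    define v' where "v' = v(x := i, x + 1 := j, x + 2 := l)"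
    have "teval w v' A = a" "teval w v' B = b"
      using AB unfolding a_def b_def v'_def x_def by (auto intro!: teval_cong)
    moreover have "v' x = i" "v' (x + 1) = j" "v' (x + 2) = l" by (simp_all add: v'_def)
    ultimately show ?thesis
      using sat_prefix_seg_Suc_spells[OF assms AB Suc.prems(1,2), of v', folded x_def] Suc.IH that
        Suc.prems(5) unfolding v'_def[symmetric] b_def[symmetric] by (simp add: k1_def k2_def)
  qed
  ultimately have "sat_prefix w (seg_prefix (Suc r)) (\<lambda>v. sat w v (seg (Suc r) t A B)) v \<longleftrightarrow> spells w a b t"
    using spells_iff_guarded Suc.prems(4) by (simp add: x_def a_def)
  then show ?case unfolding a_def b_def .
qed

definition ceil_log3 :: "nat \<Rightarrow> nat" where
  "ceil_log3 n = (LEAST r. n \<le> 3 ^ r)"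

lemma le_pow3_ceil_log3: "n \<le> 3 ^ ceil_log3 n"
  unfolding ceil_log3_def
proof (rule LeastI)
  have "n < 2 ^ n" by (rule less_exp)
  also have "(2::nat) ^ n \<le> 3 ^ n" by (rule power_mono) auto
  finally show "n \<le> 3 ^ n" by simp
qed

lemma ceil_log3_less_log: "n \<ge> 1 \<Longrightarrow> real (ceil_log3 n) < log 3 (real n) + 1"
proof (cases "ceil_log3 n")
  case 0
  moreover assume "n \<ge> 1"
  then have "0 \<le> log 3 (real n)" by simp
  ultimately show ?thesis by simp
next
  case (Suc s)
  then have "\<not> n \<le> 3 ^ s" using not_less_Least[of s "\<lambda>r. n \<le> 3 ^ r"] by (simp add: ceil_log3_def)
  then have "log 3 (3 ^ s) < log 3 (real n)" by (subst log_less_cancel_iff) auto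
  then show ?thesis using Suc by simp
qed

definition defining_sentence :: "bool list \<Rightarrow> fo" where
  "defining_sentence w =
     prenex (seg_prefix (ceil_log3 (length w))) (seg (ceil_log3 (length w)) w MinC MaxC)"

lemma sentence_defining_sentence: "sentence (defining_sentence w)"
  using free_vars_seg[of "ceil_log3 (length w)" w MinC MaxC]
  by (auto simp: sentence_def defining_sentence_def free_vars_prenex)

lemma qcount_defining_sentence: "qcount (defining_sentence w) = 3 * ceil_log3 (length w) + 1"
  by (simp add: defining_sentence_def qcount_prenex qcount_seg length_seg_prefix)

lemma models_defining_sentence_iff:
  assumes "length w \<ge> 1" "length w' \<ge> 1"
  shows "models w' (defining_sentence w) \<longleftrightarrow> w' = w"
proof -
  have "w \<noteq> []" "length w \<le> 3 ^ ceil_log3 (length w) + 1"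
    using assms(1) le_pow3_ceil_log3 by (auto simp: le_SucI)
  then have "models w' (defining_sentence w) \<longleftrightarrow> spells w' 1 (length w') w"
    using assms sat_prefix_seg[of w' w "ceil_log3 (length w)" MinC MaxC "\<lambda>_. 1"]
    by (simp add: models_def defining_sentence_def sat_prenex)
  also have "\<dots> \<longleftrightarrow> w' = w"
    by (rule spells_whole)
  finally show ?thesis .
qed

theorem mainTheorem10:
  shows "\<exists>C::real. \<forall>w::bool list. length w \<ge> 1 \<longrightarrow>
           (\<exists>\<phi>. sentence \<phi> \<and> real (qcount \<phi>) \<le> 3 * log 3 (real (length w)) + C
               \<and> models w \<phi>
               \<and> (\<forall>w'::bool list. length w' \<ge> 1 \<and> w' \<noteq> w \<longrightarrow> \<not> models w' \<phi>))"
proof (rule exI[of _ 4], intro allI impI)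
  fix w :: "bool list"
  assume w: "length w \<ge> 1"
  have "real (qcount (defining_sentence w)) \<le> 3 * log 3 (real (length w)) + 4"
    using ceil_log3_less_log[OF w] by (simp add: qcount_defining_sentence)
  then show "\<exists>\<phi>. sentence \<phi> \<and> real (qcount \<phi>) \<le> 3 * log 3 (real (length w)) + 4
      \<and> models w \<phi> \<and> (\<forall>w'. length w' \<ge> 1 \<and> w' \<noteq> w \<longrightarrow> \<not> models w' \<phi>)"
    using w sentence_defining_sentence models_defining_sentence_iff by blast
qed

end
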